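(* Every Ricci-flat trajectory (as defined in the context) satisfies $(X_1,\dots,X_r,Y_2,\dots,Y_r)(s)\to E$ as $s\to+\infty$, where $E$ is the point with $X_1=0$, $X_i=\frac{\sqrt{d_i}}{n-1}$ and $Y_i=\sqrt{\frac{n-2}{\lambda_i}}\,\frac{\sqrt{d_i}}{n-1}$ for $i=2,\dots,r$.
   Context: Fix $r\ge2$, $d_1=1$, $\lambda_1=0$, and integers $d_i\ge2$ and reals $\lambda_i>0$ for $i=2,\dots,r$; $n=\sum_id_i$. Consider the ODE system, with $'=d/ds$ and $\mathcal G=\sum_{j=1}^rX_j^2$: $X_i'=X_i(\mathcal G-1)+\frac{\lambda_iY_i^2}{\sqrt{d_i}}$, $Y_i'=Y_i\big(\mathcal G-\frac{X_i}{\sqrt{d_i}}\big)$, $i=1,\dots,r$. Let $\mathcal L=\sum_iX_i^2+\sum_i\lambda_iY_i^2-1$, $\mathcal H=\sum_i\sqrt{d_i}X_i$, and $P_0$ the point $X_1=Y_1=1$, $X_i=Y_i=0$ ($i\ge2$). A Ricci-flat trajectory is a non-constant solution defined for all $s\in\mathbb R$ with $\gamma(s)\to P_0$ as $s\to-\infty$, contained in $\{\mathcal L=0,\mathcal H=1\}$, and with $Y_i(s)>0$ for all $i$ and $s$. *)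

theory Defs
  imports "HOL-Analysis.Analysis"
begin

definition calG :: "nat \<Rightarrow> (nat \<Rightarrow> real \<Rightarrow> real) \<Rightarrow> real \<Rightarrow> real" where
  "calG r X s = (\<Sum>j\<in>{1..r}. (X j s)^2)"

definition calL :: "nat \<Rightarrow> (nat \<Rightarrow> real) \<Rightarrow> (nat \<Rightarrow> real \<Rightarrow> real) \<Rightarrow> (nat \<Rightarrow> real \<Rightarrow> real) \<Rightarrow> real \<Rightarrow> real" where
  "calL r lam X Y s = (\<Sum>i\<in>{1..r}. (X i s)^2) + (\<Sum>i\<in>{1..r}. lam i * (Y i s)^2) - 1"

definition calH :: "nat \<Rightarrow> (nat \<Rightarrow> nat) \<Rightarrow> (nat \<Rightarrow> real \<Rightarrow> real) \<Rightarrow> real \<Rightarrow> real" where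
  "calH r d X s = (\<Sum>i\<in>{1..r}. sqrt (real (d i)) * X i s)"

definition ricci_flat_trajectory ::
  "nat \<Rightarrow> (nat \<Rightarrow> nat) \<Rightarrow> (nat \<Rightarrow> real) \<Rightarrow> (nat \<Rightarrow> real \<Rightarrow> real) \<Rightarrow> (nat \<Rightarrow> real \<Rightarrow> real) \<Rightarrow> bool" where
  "ricci_flat_trajectory r d lam X Y \<longleftrightarrow>
     \<comment> \<open>solution of the ODE system on all of R\<close>
     (\<forall>i\<in>{1..r}. \<forall>s.
        ((X i) has_real_derivative
           (X i s * (calG r X s - 1) + lam i * (Y i s)^2 / sqrt (real (d i)))) (at s)
      \<and> ((Y i) has_real_derivative
           (Y i s * (calG r X s - X i s / sqrt (real (d i))))) (at s))
     \<comment> \<open>non-constant\<close>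
   \<and> (\<exists>i\<in>{1..r}. \<exists>s t. X i s \<noteq> X i t \<or> Y i s \<noteq> Y i t)
     \<comment> \<open>gamma(s) tends to P0 as s tends to minus infinity\<close>
   \<and> (\<forall>i\<in>{1..r}. ((X i) \<longlongrightarrow> (if i = 1 then 1 else 0)) at_bot
                 \<and> ((Y i) \<longlongrightarrow> (if i = 1 then 1 else 0)) at_bot)
     \<comment> \<open>contained in L = 0, H = 1\<close>
   \<and> (\<forall>s. calL r lam X Y s = 0 \<and> calH r d X s = 1)
     \<comment> \<open>positivity of all Y_i\<close>
   \<and> (\<forall>i\<in>{1..r}. \<forall>s. Y i s > 0)"

end

theory Submission
  imports Defs
begin

(* Along the trajectory G + S = 1 with S = sum_{i>=2} lam_i Y_i^2 > 0, and X_1' = - X_1 S, so X_1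
   is positive, decreasing, and converges to some a in [0, 1). With m = n - 1 and
   Lam = sum_{i>=2} d_i ln Y_i, the function V = (1 - X_1^2 - (1 - X_1)^2/m) exp (-2 Lam/m) is a
   Lyapunov function: V' = - exp (-2 Lam/m) K (2 - 2 (1 - X_1)/m) <= 0, where K >= 0 is the squared
   distance of (X_2, ..., X_r) from the point of the ray through (sqrt d_i) with the same value of H.
   A Barbalat-type argument forces K -> 0, and X_i' -> 0 for every convergent X_i. Then
   X_1' = X_1 (G - 1) -> a (a^2 + (1 - a)^2/m - 1) = 0 gives a = 0, hence G -> 1/m and
   X_i -> sqrt d_i / m; finally the equation for X_i' gives lam_i Y_i^2 -> d_i (m - 1) / m^2. *)

lemma antimono_tendsto_Inf_at_top:
  fixes f :: "'a::linorder \<Rightarrow> 'b::{conditionally_complete_linorder, linorder_topology}"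
  assumes "antimono f" and "bdd_below (range f)"
  shows "(f \<longlongrightarrow> Inf (range f)) at_top"
proof (rule decreasing_tendsto)
  show "\<forall>\<^sub>F x in at_top. Inf (range f) \<le> f x"
    using assms(2) by (intro always_eventually allI cInf_lower) auto
  fix y assume "Inf (range f) < y"
  then obtain x where "f x < y"
    using assms(2) by (auto simp: cInf_less_iff)
  then have "f z < y" if "x \<le> z" for z
    using antimonoD[OF assms(1) that] by order
  then show "\<forall>\<^sub>F x in at_top. f x < y"
    unfolding eventually_at_top_linorder by blast
qed

(* If |k s| \<ge> e at a late time s, the bound on k' keeps
   |k| \<ge> e/2 on [s, s + \<delta>]; there |g| \<ge> c e/2, so f changes by at least c e \<delta>/2 over
   that interval, contradicting the convergence of f. *)
lemma barbalat_tendsto_zero: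
  fixes f g k k' :: "real \<Rightarrow> real"
  assumes f_lim: "(f \<longlongrightarrow> l) at_top"
    and f_deriv: "\<And>s. (f has_real_derivative g s) (at s)"
    and k_deriv: "\<And>s. (k has_real_derivative k' s) (at s)"
    and k'_bound: "\<And>s. \<bar>k' s\<bar> \<le> M"
    and "c > 0"
    and k_le_g: "\<And>s. c * \<bar>k s\<bar> \<le> \<bar>g s\<bar>"
  shows "(k \<longlongrightarrow> 0) at_top"
proof (rule tendstoI)
  fix e :: real assume "e > 0"
  define M' where "M' = max M 1"
  have "M' > 0" and M': "\<And>s. \<bar>k' s\<bar> \<le> M'"
    using k'_bound by (auto simp: M'_def intro: max.coboundedI1)
  define \<delta> where "\<delta> = e / (2 * M')"
  have "\<delta> > 0" using \<open>e > 0\<close> \<open>M' > 0\<close> by (simp add: \<delta>_def)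
  define \<eta> where "\<eta> = c * e * \<delta> / 2"
  have "\<eta> > 0" using \<open>c > 0\<close> \<open>e > 0\<close> \<open>\<delta> > 0\<close> by (simp add: \<eta>_def)
  from tendstoD[OF f_lim, of "\<eta> / 2"] \<open>\<eta> > 0\<close> obtain N
    where N: "\<And>s. s \<ge> N \<Longrightarrow> \<bar>f s - l\<bar> < \<eta> / 2"
    unfolding eventually_at_top_linorder dist_real_def by auto
  have "\<bar>k s\<bar> < e" if "s \<ge> N" for s
  proof (rule ccontr)
    assume "\<not> \<bar>k s\<bar> < e"
    then have ks: "\<bar>k s\<bar> \<ge> e" by simp
    have k_large: "\<bar>k t\<bar> \<ge> e / 2" if "s < t" "t \<le> s + \<delta>" for t
    proof -
      from MVT2[OF \<open>s < t\<close>, of k k'] k_deriv obtain z where "k t - k s = (t - s) * k' z"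
        by blast
      then have "\<bar>k t - k s\<bar> \<le> (t - s) * M'"
        using M'[of z] \<open>s < t\<close> by (simp add: abs_mult mult_left_mono)
      also have "\<dots> \<le> \<delta> * M'" using that \<open>M' > 0\<close> by (simp add: mult_right_mono)
      also have "\<dots> = e / 2" using \<open>M' > 0\<close> by (simp add: \<delta>_def)
      finally show ?thesis using ks by linarith
    qed
    from MVT2[of s "s + \<delta>" f g] f_deriv \<open>\<delta> > 0\<close> obtain z
      where z: "s < z" "z < s + \<delta>" and f_step: "f (s + \<delta>) - f s = \<delta> * g z"
      by auto
    have "c * (e / 2) \<le> \<bar>g z\<bar>"
      using mult_left_mono[OF k_large[OF z(1)] less_imp_le[OF \<open>c > 0\<close>]] k_le_g[of z] z
      by linarith
    then have "\<eta> \<le> \<bar>f (s + \<delta>) - f s\<bar>"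
      using f_step \<open>\<delta> > 0\<close> mult_left_mono[of "c * (e / 2)" "\<bar>g z\<bar>" \<delta>]
      by (simp add: \<eta>_def abs_mult)
    moreover have "\<bar>f (s + \<delta>) - f s\<bar> < \<eta>"
      using N[of s] N[of "s + \<delta>"] \<open>s \<ge> N\<close> \<open>\<delta> > 0\<close> by linarith
    ultimately show False by simp
  qed
  then show "\<forall>\<^sub>F s in at_top. dist (k s) 0 < e"
    unfolding eventually_at_top_linorder dist_real_def by auto
qed

lemma lyapunov_derivative_identity:
  fixes m x g :: real
  assumes "m \<noteq> 0"
  shows "(- 2 * x + 2 * (1 - x) / m) * (x * (g - 1))
      - 2 * (1 - x\<^sup>2 - (1 - x)\<^sup>2 / m) * (m * g - (1 - x)) / m
    = - (g - x\<^sup>2 - (1 - x)\<^sup>2 / m) * (2 - 2 * (1 - x) / m)"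
  using assms by (simp add: field_simps power2_eq_square)

locale ricci_flat =
  fixes r :: nat and d :: "nat \<Rightarrow> nat" and lam :: "nat \<Rightarrow> real"
    and X Y :: "nat \<Rightarrow> real \<Rightarrow> real"
  assumes two_le_r: "2 \<le> r"
    and d_1: "d 1 = 1" and lam_1: "lam 1 = 0"
    and d_lam: "\<forall>i\<in>{2..r}. 2 \<le> d i \<and> 0 < lam i"
    and trajectory: "ricci_flat_trajectory r d lam X Y"
begin

abbreviation G :: "real \<Rightarrow> real" where
  "G \<equiv> calG r X"

definition Xdot :: "nat \<Rightarrow> real \<Rightarrow> real" where
  "Xdot i s = X i s * (G s - 1) + lam i * (Y i s)\<^sup>2 / sqrt (real (d i))"

definition S :: "real \<Rightarrow> real" where
  "S s = (\<Sum>i\<in>{2..r}. lam i * (Y i s)\<^sup>2)"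

definition m :: real where
  "m = (\<Sum>i\<in>{2..r}. real (d i))"

lemma one_mem: "1 \<in> {1..r}" and two_mem: "2 \<in> {2..r}"
  using two_le_r by auto

lemma sum_split_first: "sum f {1..r} = f 1 + sum f {2..r}"
  using sum.atLeast_Suc_atMost[of 1 r f] two_le_r by (simp add: numeral_2_eq_2)

lemma has_real_derivative_X: "i \<in> {1..r} \<Longrightarrow> (X i has_real_derivative Xdot i s) (at s)"
  and has_real_derivative_Y:
    "i \<in> {1..r} \<Longrightarrow> (Y i has_real_derivative Y i s * (G s - X i s / sqrt (real (d i)))) (at s)"
  using trajectory unfolding ricci_flat_trajectory_def Xdot_def by auto

lemma Y_pos: "i \<in> {1..r} \<Longrightarrow> 0 < Y i s"
  using trajectory unfolding ricci_flat_trajectory_def by auto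

lemma X_1_tendsto_1_at_bot: "(X 1 \<longlongrightarrow> 1) at_bot"
  using trajectory one_mem unfolding ricci_flat_trajectory_def by fastforce

lemma G_add_S: "G s + S s = 1"
proof -
  have "calL r lam X Y s = 0"
    using trajectory unfolding ricci_flat_trajectory_def by blast
  then show ?thesis
    using sum_split_first[of "\<lambda>i. lam i * (Y i s)\<^sup>2"] lam_1
    unfolding calL_def calG_def S_def by simp
qed

lemma X_1_add_weighted_sum: "X 1 s + (\<Sum>i\<in>{2..r}. sqrt (real (d i)) * X i s) = 1"
proof -
  have "calH r d X s = 1"
    using trajectory unfolding ricci_flat_trajectory_def by blast
  then show ?thesis
    using sum_split_first[of "\<lambda>i. sqrt (real (d i)) * X i s"] d_1
    unfolding calH_def by simp
qed

lemma m_ge_2: "2 \<le> m"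
proof -
  have "real (d 2) \<le> m"
    unfolding m_def using two_mem by (intro member_le_sum) auto
  then show ?thesis using d_lam two_mem by force
qed

lemma two_le_d: "i \<in> {2..r} \<Longrightarrow> 2 \<le> d i"
  and lam_pos: "i \<in> {2..r} \<Longrightarrow> 0 < lam i"
  using d_lam by auto

lemma lam_nonneg: "i \<in> {1..r} \<Longrightarrow> 0 \<le> lam i"
  using lam_1 lam_pos[of i] by (cases "i = 1") (auto simp: less_imp_le)

lemma one_le_sqrt_d: "i \<in> {1..r} \<Longrightarrow> 1 \<le> sqrt (real (d i))"
  using d_1 two_le_d[of i] by (cases "i = 1") auto

lemma lam_Y_sq_nonneg: "i \<in> {1..r} \<Longrightarrow> 0 \<le> lam i * (Y i s)\<^sup>2"
  using lam_nonneg by simp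

lemma lam_Y_sq_le_S: "i \<in> {1..r} \<Longrightarrow> lam i * (Y i s)\<^sup>2 \<le> S s"
proof (cases "i = 1")
  case True
  then show ?thesis
    using lam_1 unfolding S_def by (auto intro!: sum_nonneg lam_Y_sq_nonneg)
next
  case False
  assume "i \<in> {1..r}"
  with False show ?thesis
    unfolding S_def using lam_Y_sq_nonneg by (intro member_le_sum) auto
qed

lemma S_pos: "0 < S s"
proof -
  have "0 < lam 2 * (Y 2 s)\<^sup>2"
    using d_lam two_mem Y_pos[of 2 s] by auto
  also have "\<dots> \<le> S s"
    using lam_Y_sq_le_S[of 2 s] two_mem by auto
  finally show ?thesis .
qed

lemma X_sq_le_G: "i \<in> {1..r} \<Longrightarrow> (X i s)\<^sup>2 \<le> G s"
  unfolding calG_def by (rule member_le_sum) auto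

lemma G_nonneg: "0 \<le> G s"
  by (simp add: calG_def sum_nonneg)

lemma G_less_1: "G s < 1"
  using G_add_S S_pos by (smt (verit))

lemma abs_X_le_1: "i \<in> {1..r} \<Longrightarrow> \<bar>X i s\<bar> \<le> 1"
  using X_sq_le_G[of i s] G_less_1[of s] abs_square_le_1[of "X i s"] by linarith

lemma lam_Y_sq_le_1: "i \<in> {1..r} \<Longrightarrow> lam i * (Y i s)\<^sup>2 \<le> 1"
  using lam_Y_sq_le_S G_add_S G_nonneg by (smt (verit))

lemma abs_Xdot_le_2:
  assumes i: "i \<in> {1..r}"
  shows "\<bar>Xdot i s\<bar> \<le> 2"
proof -
  have "\<bar>X i s * (G s - 1)\<bar> \<le> 1"
    using abs_X_le_1[OF i] G_nonneg[of s] G_less_1[of s]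
    by (simp add: abs_mult abs_le_iff mult_le_one)
  moreover have "0 \<le> lam i * (Y i s)\<^sup>2 / sqrt (real (d i))"
    using lam_Y_sq_nonneg[OF i] by simp
  moreover have "lam i * (Y i s)\<^sup>2 / sqrt (real (d i)) \<le> 1 / 1"
    using lam_Y_sq_nonneg[OF i] lam_Y_sq_le_1[OF i] one_le_sqrt_d[OF i]
    by (intro frac_le) auto
  ultimately show ?thesis
    unfolding Xdot_def by linarith
qed

lemma Xdot_1: "Xdot 1 s = X 1 s * (G s - 1)"
  using lam_1 by (simp add: Xdot_def)

lemma has_real_derivative_X_1: "(X 1 has_real_derivative X 1 s * (G s - 1)) (at s)"
  using has_real_derivative_X[OF one_mem, of s] unfolding Xdot_1 .

lemma X_1_gt_half_near_bot: obtains T where "\<And>t. t \<le> T \<Longrightarrow> 1 / 2 < X 1 t"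
  using order_tendstoD(1)[OF X_1_tendsto_1_at_bot, of "1 / 2"]
  unfolding eventually_at_bot_linorder by auto

(* This avoids ODE uniqueness: Q = X_1^2 e^(2s) has Q' = 2 Q G \<ge> 0 and is positive near -\<infinity>. *)
lemma X_1_nonzero: "X 1 s \<noteq> 0"
proof -
  define Q where "Q t = (X 1 t)\<^sup>2 * exp (2 * t)" for t
  have Q_deriv: "(Q has_real_derivative 2 * (X 1 t)\<^sup>2 * exp (2 * t) * G t) (at t)" for t
  proof -
    have "(Q has_real_derivative 2 * X 1 t * Xdot 1 t * exp (2 * t) + (X 1 t)\<^sup>2 * (exp (2 * t) * 2)) (at t)"
      unfolding Q_def using has_real_derivative_X[OF one_mem]
      by (auto intro!: derivative_eq_intros)
    then show ?thesis
      unfolding Xdot_1 by (simp add: algebra_simps power2_eq_square)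
  qed
  have Q_mono: "Q t \<le> Q s" if "t \<le> s" for t
  proof (rule DERIV_nonneg_imp_nondecreasing[OF that])
    fix x
    show "\<exists>y. (Q has_real_derivative y) (at x) \<and> 0 \<le> y"
      using Q_deriv[of x] G_nonneg[of x] by auto
  qed
  obtain T where T: "\<And>t. t \<le> T \<Longrightarrow> 1 / 2 < X 1 t"
    using X_1_gt_half_near_bot by blast
  have "0 < Q (min T s)"
    using T[of "min T s"] by (simp add: Q_def)
  also have "\<dots> \<le> Q s"
    by (rule Q_mono) simp
  finally show ?thesis by (auto simp: Q_def)
qed

lemma X_1_pos: "0 < X 1 s"
proof (rule ccontr)
  assume "\<not> 0 < X 1 s"
  obtain T where T: "\<And>t. t \<le> T \<Longrightarrow> 1 / 2 < X 1 t"
    using X_1_gt_half_near_bot by blast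
  have "\<exists>t. min T s \<le> t \<and> t \<le> s \<and> X 1 t = 0"
    using \<open>\<not> 0 < X 1 s\<close> T[of "min T s"] has_real_derivative_X[OF one_mem]
    by (intro IVT2) (auto intro: DERIV_isCont)
  then show False
    using X_1_nonzero by blast
qed

lemma Xdot_1_neg: "Xdot 1 s < 0"
  unfolding Xdot_1 using X_1_pos[of s] G_less_1[of s] by (simp add: mult_pos_neg)

lemma X_1_strict_antimono:
  assumes "s < t"
  shows "X 1 t < X 1 s"
proof (rule DERIV_neg_imp_decreasing[OF assms])
  fix x
  show "\<exists>y. (X 1 has_real_derivative y) (at x) \<and> y < 0"
    using has_real_derivative_X[OF one_mem] Xdot_1_neg by blast
qed

lemma X_1_less_1: "X 1 s < 1"
proof -
  have "X 1 s < X 1 (s - 1)"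
    by (rule X_1_strict_antimono) simp
  also have "\<dots> \<le> 1"
    using abs_X_le_1[OF one_mem] by (rule abs_le_D1)
  finally show ?thesis .
qed

lemma X_1_tendsto_limit:
  obtains a where "(X 1 \<longlongrightarrow> a) at_top" and "0 \<le> a" and "a < 1"
proof -
  let ?a = "Inf (range (X 1))"
  have bdd: "bdd_below (range (X 1))"
    using X_1_pos by (intro bdd_belowI2[of _ 0]) (simp add: less_imp_le)
  have "antimono (X 1)"
    using X_1_strict_antimono by (intro antimonoI) (metis order_le_less)
  then have "(X 1 \<longlongrightarrow> ?a) at_top"
    using bdd by (rule antimono_tendsto_Inf_at_top)
  moreover have "0 \<le> ?a"
    using X_1_pos by (intro cINF_greatest) (auto simp: less_imp_le)
  moreover have "?a < 1"
    using cInf_lower[OF _ bdd, of "X 1 0"] X_1_less_1[of 0] by simp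
  ultimately show ?thesis by (rule that)
qed

definition K :: "real \<Rightarrow> real" where
  "K s = G s - (X 1 s)\<^sup>2 - (1 - X 1 s)\<^sup>2 / m"

lemma K_eq_sum_squares:
  "K s = (\<Sum>i\<in>{2..r}. (X i s - sqrt (real (d i)) * ((1 - X 1 s) / m))\<^sup>2)"
proof -
  define c where "c = (1 - X 1 s) / m"
  have "(\<Sum>i\<in>{2..r}. (X i s - sqrt (real (d i)) * c)\<^sup>2)
      = (\<Sum>i\<in>{2..r}. (X i s)\<^sup>2) - 2 * c * (\<Sum>i\<in>{2..r}. sqrt (real (d i)) * X i s) + c\<^sup>2 * m"
    by (simp add: m_def power2_diff power_mult_distrib algebra_simps sum.distrib
        sum_subtractf sum_distrib_left)
  also have "\<dots> = (G s - (X 1 s)\<^sup>2) - 2 * c * (1 - X 1 s) + c\<^sup>2 * m"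
    using sum_split_first[of "\<lambda>i. (X i s)\<^sup>2"] X_1_add_weighted_sum[of s]
    by (simp add: calG_def)
  also have "\<dots> = K s"
    using m_ge_2 by (simp add: K_def c_def field_simps power2_eq_square)
  finally show ?thesis by (simp add: c_def)
qed

lemma K_nonneg: "0 \<le> K s"
  unfolding K_eq_sum_squares by (simp add: sum_nonneg)

definition Lam :: "real \<Rightarrow> real" where
  "Lam s = (\<Sum>i\<in>{2..r}. real (d i) * ln (Y i s))"

lemma has_real_derivative_Lam: "(Lam has_real_derivative m * G s - (1 - X 1 s)) (at s)"
proof -
  have "(Lam has_real_derivative
      (\<Sum>i\<in>{2..r}. real (d i) * (G s - X i s / sqrt (real (d i))))) (at s)"
    unfolding Lam_def
  proof (intro DERIV_sum DERIV_cmult)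
    fix i assume i: "i \<in> {2..r}"
    then have "0 < Y i s" by (intro Y_pos) auto
    with has_real_derivative_Y[of i s] i show
      "((\<lambda>s. ln (Y i s)) has_real_derivative G s - X i s / sqrt (real (d i))) (at s)"
      by (auto intro!: derivative_eq_intros)
  qed
  moreover have "(\<Sum>i\<in>{2..r}. real (d i) * (G s - X i s / sqrt (real (d i))))
      = m * G s - (1 - X 1 s)"
  proof -
    have "real (d i) * (X i s / sqrt (real (d i))) = sqrt (real (d i)) * X i s" for i
      by (metis real_div_sqrt of_nat_0_le_iff times_divide_eq_left times_divide_eq_right)
    then have "(\<Sum>i\<in>{2..r}. real (d i) * (G s - X i s / sqrt (real (d i))))
        = m * G s - (\<Sum>i\<in>{2..r}. sqrt (real (d i)) * X i s)"
      by (simp add: m_def right_diff_distrib sum_subtractf sum_distrib_right)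
    then show ?thesis
      using X_1_add_weighted_sum[of s] by linarith
  qed
  ultimately show ?thesis by (simp only:)
qed

lemma Lam_bounded_above: obtains C where "\<And>s. Lam s \<le> C"
proof
  fix s
  show "Lam s \<le> (\<Sum>i\<in>{2..r}. real (d i) * ln (sqrt (1 / lam i)))"
    unfolding Lam_def
  proof (intro sum_mono mult_left_mono)
    fix i assume i: "i \<in> {2..r}"
    then have "lam i * (Y i s)\<^sup>2 \<le> 1" and "0 < lam i" and "0 < Y i s"
      using lam_Y_sq_le_1 lam_pos Y_pos by auto
    then have "Y i s \<le> sqrt (1 / lam i)"
      by (intro real_le_rsqrt) (simp add: field_simps)
    with \<open>0 < Y i s\<close> \<open>0 < lam i\<close> show "ln (Y i s) \<le> ln (sqrt (1 / lam i))"
      by simp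
  qed simp
qed

definition V :: "real \<Rightarrow> real" where
  "V s = (1 - (X 1 s)\<^sup>2 - (1 - X 1 s)\<^sup>2 / m) * exp (- 2 * Lam s / m)"

lemma has_real_derivative_V:
  "(V has_real_derivative - exp (- 2 * Lam s / m) * K s * (2 - 2 * (1 - X 1 s) / m)) (at s)"
proof -
  define x where "x = X 1 s"
  define e where "e = exp (- 2 * Lam s / m)"
  have "m \<noteq> 0" using m_ge_2 by simp
  have "(V has_real_derivative e * ((- 2 * x + 2 * (1 - x) / m) * (x * (G s - 1))
      - 2 * (1 - x\<^sup>2 - (1 - x)\<^sup>2 / m) * (m * G s - (1 - x)) / m)) (at s)"
    unfolding V_def using \<open>m \<noteq> 0\<close>
    by (auto intro!: derivative_eq_intros has_real_derivative_X_1 has_real_derivative_Lam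
        simp del: One_nat_def simp: e_def x_def field_simps power2_eq_square)
  also have "(- 2 * x + 2 * (1 - x) / m) * (x * (G s - 1))
      - 2 * (1 - x\<^sup>2 - (1 - x)\<^sup>2 / m) * (m * G s - (1 - x)) / m
    = - K s * (2 - 2 * (1 - x) / m)"
    unfolding K_def x_def by (rule lyapunov_derivative_identity[OF \<open>m \<noteq> 0\<close>])
  finally show ?thesis
    by (simp add: e_def x_def mult.assoc)
qed

lemma lyapunov_factor_ge_1: "1 \<le> 2 - 2 * (1 - X 1 s) / m"
proof -
  have "2 * (1 - X 1 s) / m \<le> 1"
    using X_1_pos[of s] m_ge_2 by (simp add: divide_le_eq)
  then show ?thesis by simp
qed

lemma V_nonneg: "0 \<le> V s"
proof -
  have "1 - (X 1 s)\<^sup>2 - (1 - X 1 s)\<^sup>2 / m = S s + K s"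
    using G_add_S[of s] by (simp add: K_def)
  then show ?thesis
    using S_pos[of s] K_nonneg[of s] by (simp add: V_def)
qed

lemma V_antimono: "antimono V"
proof (rule antimonoI)
  fix s t :: real assume "s \<le> t"
  then show "V t \<le> V s"
  proof (rule DERIV_nonpos_imp_nonincreasing)
    fix x
    have "0 \<le> exp (- 2 * Lam x / m) * K x * (2 - 2 * (1 - X 1 x) / m)"
      using K_nonneg[of x] lyapunov_factor_ge_1[of x] by simp
    then show "\<exists>y. (V has_real_derivative y) (at x) \<and> y \<le> 0"
      using has_real_derivative_V[of x] by (intro exI) auto
  qed
qed

lemma V_convergent: obtains l where "(V \<longlongrightarrow> l) at_top"
  using antimono_tendsto_Inf_at_top[OF V_antimono] V_nonneg
  by (meson bdd_belowI2)

definition Gdot :: "real \<Rightarrow> real" where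
  "Gdot s = (\<Sum>j\<in>{1..r}. 2 * X j s * Xdot j s)"

lemma has_real_derivative_G: "(G has_real_derivative Gdot s) (at s)"
proof -
  have "G = (\<lambda>s. \<Sum>j\<in>{1..r}. (X j s)\<^sup>2)"
    by (simp add: fun_eq_iff calG_def)
  then show ?thesis
    unfolding Gdot_def
  proof (simp only:, intro DERIV_sum)
    fix j assume "j \<in> {1..r}"
    from DERIV_power[OF has_real_derivative_X[OF this, of s], of 2]
    show "((\<lambda>s. (X j s)\<^sup>2) has_real_derivative 2 * X j s * Xdot j s) (at s)"
      by (rule DERIV_cong) simp
  qed
qed

lemma abs_Gdot_le: "\<bar>Gdot s\<bar> \<le> 4 * real r"
proof -
  have "\<bar>Gdot s\<bar> \<le> (\<Sum>j\<in>{1..r}. \<bar>2 * X j s * Xdot j s\<bar>)"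
    unfolding Gdot_def by (rule sum_abs)
  also have "\<dots> \<le> (\<Sum>j\<in>{1..r}. 4)"
  proof (rule sum_mono)
    fix j assume j: "j \<in> {1..r}"
    have "\<bar>X j s\<bar> * \<bar>Xdot j s\<bar> \<le> 1 * 2"
      using abs_X_le_1[OF j] abs_Xdot_le_2[OF j] by (intro mult_mono) auto
    then show "\<bar>2 * X j s * Xdot j s\<bar> \<le> 4" by (simp add: abs_mult)
  qed
  finally show ?thesis by simp
qed

lemma K_has_bounded_derivative:
  obtains K' M where "\<And>s. (K has_real_derivative K' s) (at s)" and "\<And>s. \<bar>K' s\<bar> \<le> M"
proof -
  define X1' where "X1' s = X 1 s * (G s - 1)" for s
  define K' where "K' s = Gdot s - 2 * X 1 s * X1' s + 2 * (1 - X 1 s) * X1' s / m" for s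
  have "m \<noteq> 0" using m_ge_2 by simp
  have "(K has_real_derivative K' s) (at s)" for s
    unfolding K_def[abs_def] K'_def X1'_def using \<open>m \<noteq> 0\<close>
    by (auto intro!: derivative_eq_intros has_real_derivative_X_1 has_real_derivative_G
        simp del: One_nat_def simp: field_simps power2_eq_square)
  moreover have "\<bar>K' s\<bar> \<le> 4 * real r + 3" for s
  proof -
    have X1': "\<bar>X1' s\<bar> \<le> 1"
      using X_1_pos[of s] X_1_less_1[of s] G_nonneg[of s] G_less_1[of s]
      by (simp add: X1'_def abs_mult abs_le_iff mult_le_one)
    have "\<bar>2 * X 1 s * X1' s\<bar> \<le> 2"
      using X1' X_1_pos[of s] X_1_less_1[of s] by (simp add: abs_mult mult_le_one)
    moreover have "\<bar>2 * (1 - X 1 s) * X1' s / m\<bar> \<le> 1"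
    proof -
      have "(1 - X 1 s) * \<bar>X1' s\<bar> \<le> 1"
        using X1' X_1_pos[of s] X_1_less_1[of s] by (intro mult_le_one) auto
      have "\<bar>2 * (1 - X 1 s) * X1' s / m\<bar> = 2 * ((1 - X 1 s) * \<bar>X1' s\<bar>) / m"
        using X_1_less_1[of s] m_ge_2 by (simp add: abs_mult)
      also have "\<dots> \<le> 2 * 1 / m"
        using \<open>(1 - X 1 s) * \<bar>X1' s\<bar> \<le> 1\<close> m_ge_2 by (intro divide_right_mono) auto
      also have "\<dots> \<le> 1"
        using m_ge_2 by simp
      finally show ?thesis .
    qed
    ultimately show ?thesis
      using abs_Gdot_le[of s] unfolding K'_def by linarith
  qed
  ultimately show thesis by (rule that)
qed

lemma K_tendsto_0: "(K \<longlongrightarrow> 0) at_top"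
proof -
  obtain l where V_lim: "(V \<longlongrightarrow> l) at_top" by (rule V_convergent)
  obtain K' M where K': "\<And>s. (K has_real_derivative K' s) (at s)" "\<And>s. \<bar>K' s\<bar> \<le> M"
    using K_has_bounded_derivative by blast
  obtain C where C: "\<And>s. Lam s \<le> C" using Lam_bounded_above by blast
  have "exp (- 2 * C / m) * \<bar>K s\<bar>
      \<le> \<bar>- exp (- 2 * Lam s / m) * K s * (2 - 2 * (1 - X 1 s) / m)\<bar>" for s
  proof -
    have "exp (- 2 * C / m) \<le> exp (- 2 * Lam s / m)"
      using C[of s] m_ge_2 by (simp add: divide_right_mono)
    then have "exp (- 2 * C / m) * K s \<le> exp (- 2 * Lam s / m) * K s * 1"
      using K_nonneg[of s] by (simp add: mult_right_mono)
    also have "\<dots> \<le> exp (- 2 * Lam s / m) * K s * (2 - 2 * (1 - X 1 s) / m)"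
      using K_nonneg[of s] lyapunov_factor_ge_1[of s] by (intro mult_left_mono) auto
    finally show ?thesis
      using K_nonneg[of s] lyapunov_factor_ge_1[of s] by (simp add: abs_mult)
  qed
  then show ?thesis
    by (rule barbalat_tendsto_zero[OF V_lim has_real_derivative_V K' exp_gt_zero])
qed

lemma abs_lam_Y_sq_derivative_le:
  assumes i: "i \<in> {1..r}"
  shows "\<bar>2 * (lam i * (Y i s)\<^sup>2) * (G s - X i s / sqrt (real (d i))) / sqrt (real (d i))\<bar> \<le> 4"
proof -
  define q where "q = sqrt (real (d i))"
  define w where "w = lam i * (Y i s)\<^sup>2"
  have "1 \<le> q" using one_le_sqrt_d[OF i] by (simp add: q_def)
  have "0 \<le> w" "w \<le> 1"
    using lam_Y_sq_nonneg[OF i] lam_Y_sq_le_1[OF i] by (auto simp: w_def)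
  have "\<bar>X i s / q\<bar> \<le> 1"
    using abs_X_le_1[OF i, of s] \<open>1 \<le> q\<close> by (simp add: abs_divide divide_le_eq)
  then have "\<bar>G s - X i s / q\<bar> \<le> 2"
    using abs_triangle_ineq4[of "G s" "X i s / q"] abs_of_nonneg[OF G_nonneg[of s]] G_less_1[of s]
    by linarith
  then have "w * \<bar>G s - X i s / q\<bar> \<le> 1 * 2"
    using \<open>0 \<le> w\<close> \<open>w \<le> 1\<close> by (intro mult_mono) auto
  have "\<bar>2 * w * (G s - X i s / q) / q\<bar> = 2 * (w * \<bar>G s - X i s / q\<bar>) / q"
    using \<open>0 \<le> w\<close> \<open>1 \<le> q\<close> by (simp add: abs_mult abs_divide)
  also have "\<dots> \<le> 2 * 2 / q"
    using \<open>w * \<bar>G s - X i s / q\<bar> \<le> 1 * 2\<close> \<open>1 \<le> q\<close> by (intro divide_right_mono) auto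
  also have "\<dots> \<le> 4"
    using \<open>1 \<le> q\<close> by (simp add: divide_le_eq)
  finally show ?thesis by (simp add: q_def w_def)
qed

lemma Xdot_has_bounded_derivative:
  assumes i: "i \<in> {1..r}"
  obtains Xdot' M where "\<And>s. (Xdot i has_real_derivative Xdot' s) (at s)"
    and "\<And>s. \<bar>Xdot' s\<bar> \<le> M"
proof -
  define q where "q = sqrt (real (d i))"
  have "1 \<le> q" using one_le_sqrt_d[OF i] by (simp add: q_def)
  define Xdot' where "Xdot' s = Xdot i s * (G s - 1) + X i s * Gdot s
      + 2 * (lam i * (Y i s)\<^sup>2) * (G s - X i s / q) / q" for s
  have "(Xdot i has_real_derivative Xdot' s) (at s)" for s
  proof -
    have "Xdot i = (\<lambda>s. X i s * (G s - 1) + lam i * (Y i s)\<^sup>2 / q)"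
      by (simp add: fun_eq_iff Xdot_def q_def)
    then show ?thesis
      unfolding Xdot'_def using \<open>1 \<le> q\<close>
      by (auto intro!: derivative_eq_intros has_real_derivative_X[OF i]
          has_real_derivative_Y[OF i, folded q_def] has_real_derivative_G
          simp: field_simps power2_eq_square)
  qed
  moreover have "\<bar>Xdot' s\<bar> \<le> 4 * real r + 6" for s
  proof -
    have "\<bar>Xdot i s\<bar> * \<bar>G s - 1\<bar> \<le> 2 * 1"
      using abs_Xdot_le_2[OF i, of s] G_nonneg[of s] G_less_1[of s] by (intro mult_mono) auto
    moreover have "\<bar>X i s\<bar> * \<bar>Gdot s\<bar> \<le> 1 * (4 * real r)"
      using abs_X_le_1[OF i, of s] abs_Gdot_le[of s] by (intro mult_mono) auto
    moreover have "\<bar>2 * (lam i * (Y i s)\<^sup>2) * (G s - X i s / q) / q\<bar> \<le> 4"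
      unfolding q_def by (rule abs_lam_Y_sq_derivative_le[OF i])
    ultimately show ?thesis
      unfolding Xdot'_def abs_mult[symmetric] by linarith
  qed
  ultimately show thesis by (rule that)
qed

lemma Xdot_tendsto_0:
  assumes i: "i \<in> {1..r}" and "(X i \<longlongrightarrow> L) at_top"
  shows "(Xdot i \<longlongrightarrow> 0) at_top"
proof -
  obtain Xdot' M where "\<And>s. (Xdot i has_real_derivative Xdot' s) (at s)" "\<And>s. \<bar>Xdot' s\<bar> \<le> M"
    using Xdot_has_bounded_derivative[OF i] by blast
  then show ?thesis
    by (rule barbalat_tendsto_zero[OF assms(2) has_real_derivative_X[OF i] _ _ zero_less_one]) simp
qed

lemma G_tendsto:
  assumes "(X 1 \<longlongrightarrow> a) at_top"
  shows "(G \<longlongrightarrow> a\<^sup>2 + (1 - a)\<^sup>2 / m) at_top"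
proof -
  have "G = (\<lambda>s. K s + (X 1 s)\<^sup>2 + (1 - X 1 s)\<^sup>2 / m)"
    by (simp add: fun_eq_iff K_def)
  moreover have "((\<lambda>s. K s + (X 1 s)\<^sup>2 + (1 - X 1 s)\<^sup>2 / m) \<longlongrightarrow> 0 + a\<^sup>2 + (1 - a)\<^sup>2 / m) at_top"
    using m_ge_2 by (intro tendsto_intros K_tendsto_0 assms) auto
  ultimately show ?thesis by simp
qed

lemma X_1_tendsto_0: "(X 1 \<longlongrightarrow> 0) at_top"
proof -
  obtain a where lim: "(X 1 \<longlongrightarrow> a) at_top" and "0 \<le> a" "a < 1"
    by (rule X_1_tendsto_limit)
  define q where "q = a\<^sup>2 + (1 - a)\<^sup>2 / m"
  have "Xdot 1 = (\<lambda>s. X 1 s * (G s - 1))"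
    using Xdot_1 by (simp add: fun_eq_iff)
  then have "(Xdot 1 \<longlongrightarrow> a * (q - 1)) at_top"
    unfolding q_def by (simp only:) (intro tendsto_intros lim G_tendsto)
  then have "a * (q - 1) = 0"
    by (rule tendsto_unique[OF trivial_limit_at_top_linorder _ Xdot_tendsto_0[OF one_mem lim]])
  moreover have "q < 1"
  proof -
    have "(1 - a)\<^sup>2 / m \<le> (1 - a)\<^sup>2 / 2"
      using m_ge_2 by (intro divide_left_mono) auto
    also have "\<dots> \<le> (1 - a) / 2"
      using \<open>0 \<le> a\<close> \<open>a < 1\<close> by (simp add: power2_eq_square mult_le_cancel_left1)
    finally have "(1 - a)\<^sup>2 / m \<le> (1 - a) / 2" .
    moreover have "a\<^sup>2 \<le> a"
      using \<open>0 \<le> a\<close> \<open>a < 1\<close> by (simp add: power2_eq_square mult_left_le)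
    ultimately have "q \<le> a + (1 - a) / 2"
      unfolding q_def by (rule add_mono[rotated])
    also have "\<dots> < 1"
      using \<open>a < 1\<close> by (simp add: field_simps)
    finally show ?thesis .
  qed
  ultimately show ?thesis
    using lim by simp
qed

lemma G_tendsto_inverse_m: "(G \<longlongrightarrow> 1 / m) at_top"
  using G_tendsto[OF X_1_tendsto_0] by simp

lemma X_tendsto:
  assumes i: "i \<in> {2..r}"
  shows "(X i \<longlongrightarrow> sqrt (real (d i)) / m) at_top"
proof -
  define t where "t s = X i s - sqrt (real (d i)) * ((1 - X 1 s) / m)" for s
  have "\<bar>t s\<bar> \<le> sqrt (K s)" for s
  proof -
    have "(t s)\<^sup>2 \<le> K s"
      unfolding t_def K_eq_sum_squares using i by (intro member_le_sum) auto
    from real_sqrt_le_mono[OF this] show ?thesis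
      by simp
  qed
  moreover have "((\<lambda>s. sqrt (K s)) \<longlongrightarrow> 0) at_top"
    using tendsto_real_sqrt[OF K_tendsto_0] by simp
  ultimately have "(t \<longlongrightarrow> 0) at_top"
    by (intro Lim_null_comparison[of t "\<lambda>s. sqrt (K s)"] always_eventually allI) simp_all
  then have "((\<lambda>s. t s + sqrt (real (d i)) * ((1 - X 1 s) / m))
      \<longlongrightarrow> 0 + sqrt (real (d i)) * ((1 - 0) / m)) at_top"
    using m_ge_2 by (intro tendsto_intros X_1_tendsto_0) auto
  then show ?thesis
    by (simp add: t_def)
qed

lemma Y_tendsto:
  assumes i: "i \<in> {2..r}"
  shows "(Y i \<longlongrightarrow> sqrt ((m - 1) / lam i) * (sqrt (real (d i)) / m)) at_top"
proof -
  have i': "i \<in> {1..r}" using i by auto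
  define q where "q = sqrt (real (d i))"
  have "0 < q" "0 < lam i"
    using one_le_sqrt_d[OF i'] lam_pos[OF i] by (auto simp: q_def)
  have Y_sq: "(Y i s)\<^sup>2 = q * (Xdot i s - X i s * (G s - 1)) / lam i" for s
    using \<open>0 < q\<close> \<open>0 < lam i\<close> by (simp add: Xdot_def q_def field_simps)
  have "((\<lambda>s. q * (Xdot i s - X i s * (G s - 1)) / lam i)
      \<longlongrightarrow> q * (0 - q / m * (1 / m - 1)) / lam i) at_top"
    using \<open>0 < lam i\<close> X_tendsto[OF i]
    by (intro tendsto_intros Xdot_tendsto_0[OF i'] G_tendsto_inverse_m) (auto simp: q_def)
  then have "((\<lambda>s. sqrt ((Y i s)\<^sup>2)) \<longlongrightarrow> sqrt (q * (0 - q / m * (1 / m - 1)) / lam i)) at_top"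
    unfolding Y_sq by (rule tendsto_real_sqrt)
  moreover have "(\<lambda>s. sqrt ((Y i s)\<^sup>2)) = Y i"
    using Y_pos[OF i'] by (simp add: fun_eq_iff less_imp_le)
  moreover have "sqrt (q * (0 - q / m * (1 / m - 1)) / lam i) = sqrt ((m - 1) / lam i) * (q / m)"
  proof (rule real_sqrt_unique)
    show "(sqrt ((m - 1) / lam i) * (q / m))\<^sup>2 = q * (0 - q / m * (1 / m - 1)) / lam i"
      using m_ge_2 \<open>0 < lam i\<close> \<open>0 < q\<close>
      by (simp add: power_mult_distrib power_divide field_simps power2_eq_square)
    show "0 \<le> sqrt ((m - 1) / lam i) * (q / m)"
      using m_ge_2 \<open>0 < lam i\<close> \<open>0 < q\<close> by simp
  qed
  ultimately show ?thesis
    by (simp add: q_def)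
qed

end

theorem theorem4p5:
  fixes r :: nat and d :: "nat \<Rightarrow> nat" and lam :: "nat \<Rightarrow> real"
    and X Y :: "nat \<Rightarrow> real \<Rightarrow> real"
  assumes "r \<ge> 2"
    and "d 1 = 1" and "lam 1 = 0"
    and "\<forall>i\<in>{2..r}. d i \<ge> 2 \<and> lam i > 0"
    and n_def: "n = (\<Sum>i\<in>{1..r}. d i)"
    and "ricci_flat_trajectory r d lam X Y"
  shows "((X 1) \<longlongrightarrow> 0) at_top
    \<and> (\<forall>i\<in>{2..r}. ((X i) \<longlongrightarrow> sqrt (real (d i)) / (real n - 1)) at_top
         \<and> ((Y i) \<longlongrightarrow> sqrt ((real n - 2) / lam i) * (sqrt (real (d i)) / (real n - 1))) at_top)"
proof -
  interpret ricci_flat r d lam X Y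
    using assms by unfold_locales auto
  have "real n - 1 = m"
    using sum_split_first[of "\<lambda>i. real (d i)"] d_1 by (simp add: n_def m_def)
  moreover have "real n - 2 = m - 1"
    using calculation by simp
  ultimately show ?thesis
    using X_1_tendsto_0 X_tendsto Y_tendsto by simp
qed

end
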